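(* Let $g(x,y)=xy$. Let $t>0$ and let $I=[a,a+3t]$, $J=[b,b+3t]$ with $\tfrac23\le a\le b\le 1$, and assume $I$ and $J$ are either identical or disjoint. Write $\ddot I=[a,a+t]\cup[a+2t,a+3t]$ and $\ddot J=[b,b+t]\cup[b+2t,b+3t]$. Then: (i) if $a<b$, then $g(\ddot I,\ddot J) = g(I,J)$; (ii) if $a=b$ (so $I=J$), then $g(\ddot I,\ddot I) = g(I,I)\setminus\big((a+2t)^2-t^2,\,(a+2t)^2\big)$.
   Context: For sets $A,B\subset\mathbb{R}$, $g(A,B)=\{xy: x\in A, y\in B\}$. *)

theory Defs
  imports Complex_Main
begin

definition g :: "real set \<Rightarrow> real set \<Rightarrow> real set" where
  "g A B = {x * y | x y. x \<in> A \<and> y \<in> B}"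

end

theory Submission
  imports Defs
begin

text \<open>
  For positive intervals g is the interval of endpoint products, so g of two two-piece sets is
  a union of four intervals.  For a + t \<le> b \<le> 3(a + t), which disjointness of I and J together
  with 2/3 \<le> a \<le> b \<le> 1 guarantees, consecutive ones overlap and they fill g I J.  When I = J
  the two mixed products coincide and exactly one hole remains, between
  (a + t)(a + 3t) = (a + 2t)^2 - t^2 and (a + 2t)^2.
\<close>

lemma g_Un_left: "g (A \<union> B) C = g A C \<union> g B C"
  unfolding g_def by blast

lemma g_Un_right: "g A (B \<union> C) = g A B \<union> g A C"
  unfolding g_def by blast

lemma g_atLeastAtMost:
  fixes p q r s :: real
  assumes "0 < p" "p \<le> q" "0 < r" "r \<le> s"
  shows "g {p..q} {r..s} = {p*r..q*s}"
proof
  show "g {p..q} {r..s} \<subseteq> {p*r..q*s}"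
    unfolding g_def using assms by (auto intro!: mult_mono)
next
  show "{p*r..q*s} \<subseteq> g {p..q} {r..s}"
  proof
    fix z assume z: "z \<in> {p*r..q*s}"
    show "z \<in> g {p..q} {r..s}"
    proof (cases "z \<le> q*r")
      case True
      then have "z/r \<in> {p..q}" "z = (z/r)*r"
        using z assms by (auto simp: field_simps)
      then show ?thesis unfolding g_def using assms by fastforce
    next
      case False
      then have "z/q \<in> {r..s}" "z = q*(z/q)"
        using z assms by (auto simp: field_simps)
      then show ?thesis unfolding g_def using assms by fastforce
    qed
  qed
qed

lemma g_two_pieces:
  fixes a b t :: real
  assumes "0 < a" "0 < b" "0 \<le> t"
  shows "g ({a..a+t} \<union> {a+2*t..a+3*t}) ({b..b+t} \<union> {b+2*t..b+3*t})
       = {a*b..(a+t)*(b+t)} \<union> {a*(b+2*t)..(a+t)*(b+3*t)}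
         \<union> {(a+2*t)*b..(a+3*t)*(b+t)} \<union> {(a+2*t)*(b+2*t)..(a+3*t)*(b+3*t)}"
  unfolding g_Un_left g_Un_right using assms
  by (simp add: g_atLeastAtMost Un_ac)

lemma atLeastAtMost_Un_overlap:
  fixes l1 l2 u1 u2 :: "'a::linorder"
  assumes "l1 \<le> l2" "l2 \<le> u1" "u1 \<le> u2"
  shows "{l1..u1} \<union> {l2..u2} = {l1..u2}"
  using assms by auto

lemma atLeastAtMost_Un_gap:
  fixes l1 l2 u1 u2 :: "'a::linorder"
  assumes "l1 \<le> u1" "u1 \<le> l2" "l2 \<le> u2"
  shows "{l1..u1} \<union> {l2..u2} = {l1..u2} - {u1<..<l2}"
  using assms by auto

lemma g_two_pieces_distinct:
  fixes a b t :: real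
  assumes "0 < a" "0 \<le> t" "a + t \<le> b" "b \<le> 3*(a + t)"
  shows "g ({a..a+t} \<union> {a+2*t..a+3*t}) ({b..b+t} \<union> {b+2*t..b+3*t})
       = g {a..a+3*t} {b..b+3*t}"
proof -
  have "0 < b" "a \<le> b" using assms by linarith+
  have "a*t \<le> b*t" "a*t \<le> (b + t)*t" "(a + t)*t \<le> b*t" "b*t \<le> 3*(a + t)*t" "0 \<le> a*t"
    using assms \<open>a \<le> b\<close> by (simp_all add: mult_right_mono)
  then have "a*b \<le> a*(b+2*t)" "a*(b+2*t) \<le> (a+t)*(b+t)" "(a+t)*(b+t) \<le> (a+t)*(b+3*t)"
    "a*b \<le> (a+2*t)*b" "(a+2*t)*b \<le> (a+t)*(b+3*t)" "(a+t)*(b+3*t) \<le> (a+3*t)*(b+t)"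
    "a*b \<le> (a+2*t)*(b+2*t)" "(a+2*t)*(b+2*t) \<le> (a+3*t)*(b+t)"
    "(a+3*t)*(b+t) \<le> (a+3*t)*(b+3*t)"
    by (simp_all add: algebra_simps)
  then show ?thesis
    using assms \<open>0 < b\<close> unfolding g_two_pieces[OF \<open>0 < a\<close> \<open>0 < b\<close> \<open>0 \<le> t\<close>]
    by (simp add: g_atLeastAtMost atLeastAtMost_Un_overlap)
qed

lemma g_two_pieces_same:
  fixes a t :: real
  assumes "0 < a" "0 < t"
  shows "g ({a..a+t} \<union> {a+2*t..a+3*t}) ({a..a+t} \<union> {a+2*t..a+3*t})
       = g {a..a+3*t} {a..a+3*t} - {(a+2*t)^2 - t^2 <..< (a+2*t)^2}"
proof -
  have hole: "(a+2*t)^2 - t^2 = (a+t)*(a+3*t)" "(a+2*t)^2 = (a+2*t)*(a+2*t)"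
    by (simp_all add: algebra_simps power2_eq_square)
  have "0 < a*t" "0 < t*t" using assms by simp_all
  then have "a*a \<le> a*(a+2*t)" "a*(a+2*t) \<le> (a+t)*(a+t)" "(a+t)*(a+t) \<le> (a+t)*(a+3*t)"
    "a*(a+2*t) \<le> (a+t)*(a+3*t)" "a*a \<le> (a+t)*(a+3*t)" "(a+t)*(a+3*t) \<le> (a+2*t)*(a+2*t)"
    "(a+2*t)*(a+2*t) \<le> (a+3*t)*(a+3*t)"
    by (simp_all add: algebra_simps)
  moreover have "g ({a..a+t} \<union> {a+2*t..a+3*t}) ({a..a+t} \<union> {a+2*t..a+3*t})
      = {a*a..(a+t)*(a+t)} \<union> {a*(a+2*t)..(a+t)*(a+3*t)} \<union> {a*(a+2*t)..(a+t)*(a+3*t)}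
        \<union> {(a+2*t)*(a+2*t)..(a+3*t)*(a+3*t)}"
    unfolding g_two_pieces[OF \<open>0 < a\<close> \<open>0 < a\<close> less_imp_le[OF \<open>0 < t\<close>]]
    by (simp add: ac_simps)
  ultimately show ?thesis
    using assms unfolding hole(1) unfolding hole(2)
    by (simp add: g_atLeastAtMost atLeastAtMost_Un_overlap atLeastAtMost_Un_gap)
qed

theorem lemma3p8:
  fixes a b t :: real
  assumes "t > 0"
    and "2/3 \<le> a" and "a \<le> b" and "b \<le> 1"
    and "{a..a+3*t} = {b..b+3*t} \<or> {a..a+3*t} \<inter> {b..b+3*t} = {}"
  shows "(a < b \<longrightarrow>
            g ({a..a+t} \<union> {a+2*t..a+3*t}) ({b..b+t} \<union> {b+2*t..b+3*t})
              = g {a..a+3*t} {b..b+3*t})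
       \<and> (a = b \<longrightarrow>
            g ({a..a+t} \<union> {a+2*t..a+3*t}) ({a..a+t} \<union> {a+2*t..a+3*t})
              = g {a..a+3*t} {a..a+3*t} - {(a+2*t)^2 - t^2 <..< (a+2*t)^2})"
proof (intro conjI impI)
  assume "a < b"
  have "a + 3*t < b"
  proof (rule ccontr)
    assume "\<not> a + 3*t < b"
    then have "{a..a+3*t} \<inter> {b..b+3*t} \<noteq> {}"
      using assms(1) \<open>a < b\<close> by auto
    then have "a \<in> {b..b+3*t}"
      using assms(1,5) by auto
    then show False using \<open>a < b\<close> by simp
  qed
  then show "g ({a..a+t} \<union> {a+2*t..a+3*t}) ({b..b+t} \<union> {b+2*t..b+3*t})
      = g {a..a+3*t} {b..b+3*t}"
    using assms(1-4) by (intro g_two_pieces_distinct) auto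
next
  show "g ({a..a+t} \<union> {a+2*t..a+3*t}) ({a..a+t} \<union> {a+2*t..a+3*t})
      = g {a..a+3*t} {a..a+3*t} - {(a+2*t)^2 - t^2 <..< (a+2*t)^2}"
    using assms(1,2) by (intro g_two_pieces_same) auto
qed

end
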